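(* Let $n\ge 1$ and let $E,F$ be tagged edges of the punctured $(n,\infty)$-gon $\mathcal{P}_{n,\infty}$. Then $(E,F)$ is an elementary move if and only if $(\tau F, E)$ is an elementary move.
   Context: $\mathcal{P}_{n,\infty}$: the closed unit disk $D\subset\mathbb{R}^2$ with a puncture (marked point) at the origin and boundary marked points labeled $(h,a)$, $h\in\{1,\dots,n\}$, $a\in\mathbb{Z}$, arranged on $\partial D$ so that, going counterclockwise, the points of block $h$ appear in increasing order of $a$, the blocks appear in the cyclic order $1,2,\dots,n$, and the marked points accumulate from both sides exactly at $n$ unmarked points $a_1,\dots,a_n\in\partial D$, with $a_h$ lying between block $h$ and block $h+1$ (indices mod $n$); there are no one-sided accumulation points. For a boundary marked point $P=(h,a)$ write $P^+=(h,a+1)$, $P^-=(h,a-1)$, $P^{++}=(h,a+2)$. Tagged edges: for each ordered pair of distinct boundary marked points $P\neq Q$ with $Q\neq P^+$, the edge $E_{P,Q}$ is the homotopy class (in $D$ minus the puncture, relative endpoints) of a non-self-crossing path from $P$ to $Q$ through the interior of $D$ minus the puncture, homotopic to the counterclockwise boundary path from $P$ to $Q$; and for each boundary marked point $P$ there are two tagged edges $E^{+1}_{P,P}$ and $E^{-1}_{P,P}$, each drawn as the segment from $P$ to the puncture (tagged if the sign is $-1$). Translation: $\tau(E_{P,Q})=E_{P^+,Q^+}$ for $P\neq Q$, and $\tau(E^{\epsilon}_{P,P})=E^{-\epsilon}_{P^+,P^+}$. Elementary move: a pair $(E,F)$ of distinct tagged edges such that one of the following holds, with $P=(h_1,a_1)$,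 $Q=(k_1,b_1)$: (i) if $E=E_{P,Q}$ with $Q=P^{++}$, then $F=E_{P^-,Q}$; (ii) if $E=E_{P,Q}$ with $h_1\ne k_1$, or with $h_1=k_1$ and $Q$ lying (in the cyclic order starting at $P$) at or after $P^{+++}=(h_1,a_1+3)$ and strictly before $P^-$, then $F=E_{P^-,Q}$ or $F=E_{P,Q^-}$; (iii) if $E=E_{P,Q}$ with $Q=P^-$, then $F=E_{P,Q^-}$ or $F=E^{+1}_{Q,Q}$ or $F=E^{-1}_{Q,Q}$; (iv) if $E=E^{\epsilon}_{P,P}$, then $F=E_{P,P^-}$. *)

theory Defs
  imports Main
begin

text \<open>Boundary marked points of the punctured (n,infinity)-gon: pairs (h,a),
  h a block index in {1..n}, a an integer.\<close>
type_synonym mpoint = "nat \<times> int"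

definition mpoint_valid :: "nat \<Rightarrow> mpoint \<Rightarrow> bool" where
  "mpoint_valid n P \<longleftrightarrow> 1 \<le> fst P \<and> fst P \<le> n"

definition shift :: "int \<Rightarrow> mpoint \<Rightarrow> mpoint" where
  "shift k P = (fst P, snd P + k)"

abbreviation psucc :: "mpoint \<Rightarrow> mpoint" where "psucc P \<equiv> shift 1 P"
abbreviation ppred :: "mpoint \<Rightarrow> mpoint" where "ppred P \<equiv> shift (-1) P"

text \<open>Tagged edges: Arc P Q is E_{P,Q} (P \<noteq> Q); Loop P e is E^e_{P,P}.\<close>
datatype tedge = Arc mpoint mpoint | Loop mpoint int

fun tagged_edge :: "nat \<Rightarrow> tedge \<Rightarrow> bool" where
  "tagged_edge n (Arc P Q) \<longleftrightarrow>
     mpoint_valid n P \<and> mpoint_valid n Q \<and> P \<noteq> Q \<and> Q \<noteq> psucc P"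
| "tagged_edge n (Loop P e) \<longleftrightarrow> mpoint_valid n P \<and> (e = 1 \<or> e = -1)"

fun tau :: "tedge \<Rightarrow> tedge" where
  "tau (Arc P Q) = Arc (psucc P) (psucc Q)"
| "tau (Loop P e) = Loop (psucc P) (- e)"

text \<open>Position of a point Q of the same block as P in the counterclockwise
  cyclic order starting at P: first the points (h,b) with b \<ge> a (increasing),
  then (after passing through all the other blocks) the points (h,b) with b < a
  (increasing).\<close>
definition cyc_key :: "mpoint \<Rightarrow> mpoint \<Rightarrow> nat \<times> int" where
  "cyc_key P Q = (if snd Q \<ge> snd P then (0, snd Q) else (1, snd Q))"

definition cyc_le :: "mpoint \<Rightarrow> mpoint \<Rightarrow> mpoint \<Rightarrow> bool" where
  "cyc_le P Q R \<longleftrightarrow> (let (x, y) = cyc_key P Q; (u, v) = cyc_key P R in x < u \<or> (x = u \<and> y \<le> v))"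

definition cyc_less :: "mpoint \<Rightarrow> mpoint \<Rightarrow> mpoint \<Rightarrow> bool" where
  "cyc_less P Q R \<longleftrightarrow> cyc_le P Q R \<and> Q \<noteq> R"

definition case_ii :: "mpoint \<Rightarrow> mpoint \<Rightarrow> bool" where
  "case_ii P Q \<longleftrightarrow> fst P \<noteq> fst Q \<or>
     (fst P = fst Q \<and> cyc_le P (shift 3 P) Q \<and> cyc_less P Q (ppred P))"

fun elem_move_rule :: "tedge \<Rightarrow> tedge \<Rightarrow> bool" where
  "elem_move_rule (Arc P Q) F \<longleftrightarrow>
      (Q = shift 2 P \<and> F = Arc (ppred P) Q)
    \<or> (case_ii P Q \<and> (F = Arc (ppred P) Q \<or> F = Arc P (ppred Q)))
    \<or> (Q = ppred P \<and> (F = Arc P (ppred Q) \<or> F = Loop Q 1 \<or> F = Loop Q (-1)))"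
| "elem_move_rule (Loop P e) F \<longleftrightarrow> F = Arc P (ppred P)"

definition elem_move :: "nat \<Rightarrow> tedge \<Rightarrow> tedge \<Rightarrow> bool" where
  "elem_move n E F \<longleftrightarrow> tagged_edge n E \<and> tagged_edge n F \<and> E \<noteq> F \<and> elem_move_rule E F"

end

theory Submission
  imports Defs
begin

text \<open>Once the cyclic-order condition of rule (ii) is read off in coordinates, the side
  conditions of rules (i)--(iii) for a move between two arcs say exactly that the new arc
  is again a tagged edge. So the arc-to-arc moves are E_{P,Q} to E_{P^-,Q} and
  E_{P,Q} to E_{P,Q^-}, and the only other moves are between E_{P^+,P} and the two loops
  at P. If (E, F) moves one endpoint of E back by one, then tau F, which shifts both
  endpoints of F forward, differs from E only in the other endpoint, one step further on;
  (tau F, E) moves that endpoint back.\<close>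

lemma shift_shift [simp]: "shift k (shift l P) = shift (l + k) P"
  by (simp add: shift_def)

lemma shift_0 [simp]: "shift 0 P = P"
  by (simp add: shift_def)

lemma eq_psucc_iff: "P = psucc Q \<longleftrightarrow> Q = ppred P"
  by (auto simp: shift_def prod_eq_iff)

lemma case_ii_iff:
  "case_ii P Q \<longleftrightarrow> fst P \<noteq> fst Q \<or> snd Q \<ge> snd P + 3 \<or> snd Q \<le> snd P - 2"
  by (auto simp: case_ii_def cyc_less_def cyc_le_def cyc_key_def shift_def prod_eq_iff)

lemma tagged_edge_tau: "tagged_edge n (tau E) \<longleftrightarrow> tagged_edge n E"
  by (cases E) (auto simp: mpoint_valid_def shift_def prod_eq_iff)

lemma tagged_edge_Arc_ppred_left:
  assumes "tagged_edge n (Arc P Q)"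
  shows "tagged_edge n (Arc (ppred P) Q) \<longleftrightarrow> Q = shift 2 P \<or> case_ii P Q"
  using assms by (cases P; cases Q) (auto simp: case_ii_iff mpoint_valid_def shift_def)

lemma tagged_edge_Arc_ppred_right:
  assumes "tagged_edge n (Arc P Q)"
  shows "tagged_edge n (Arc P (ppred Q)) \<longleftrightarrow> case_ii P Q \<or> Q = ppred P"
  using assms by (cases P; cases Q) (auto simp: case_ii_iff mpoint_valid_def shift_def)

lemma elem_move_Arc_Arc:
  "elem_move n (Arc P Q) (Arc P' Q') \<longleftrightarrow>
     tagged_edge n (Arc P Q) \<and> tagged_edge n (Arc P' Q') \<and>
     (P' = ppred P \<and> Q' = Q \<or> P' = P \<and> Q' = ppred Q)"
proof -
  have rule: "elem_move_rule (Arc P Q) (Arc P' Q') \<longleftrightarrow>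
      P' = ppred P \<and> Q' = Q \<and> (Q = shift 2 P \<or> case_ii P Q)
    \<or> P' = P \<and> Q' = ppred Q \<and> (case_ii P Q \<or> Q = ppred P)"
    by auto
  have distinct: "Arc (ppred P) Q \<noteq> Arc P Q" "Arc P (ppred Q) \<noteq> Arc P Q"
    by (simp_all add: shift_def prod_eq_iff)
  show ?thesis
    unfolding elem_move_def rule
    using tagged_edge_Arc_ppred_left[of n P Q] tagged_edge_Arc_ppred_right[of n P Q] distinct
    by (smt (verit))
qed

lemma elem_move_Arc_Loop:
  "elem_move n (Arc P Q) (Loop R e) \<longleftrightarrow>
     tagged_edge n (Arc P Q) \<and> tagged_edge n (Loop R e) \<and> Q = ppred P \<and> R = Q"
  by (auto simp: elem_move_def)

lemma elem_move_Loop: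
  "elem_move n (Loop P e) F \<longleftrightarrow> tagged_edge n (Loop P e) \<and> F = Arc P (ppred P)"
  by (auto simp: elem_move_def mpoint_valid_def shift_def prod_eq_iff)

declare tagged_edge.simps [simp del] tau.simps [simp del]

theorem lemma4p1:
  fixes n :: nat and E F :: tedge
  assumes "n \<ge> 1" and "tagged_edge n E" and "tagged_edge n F"
  shows "elem_move n E F \<longleftrightarrow> elem_move n (tau F) E"
proof (cases E; cases F)
  fix P Q P' Q' assume E: "E = Arc P Q" and F: "F = Arc P' Q'"
  have "elem_move n (tau F) E \<longleftrightarrow> tagged_edge n F \<and> tagged_edge n E \<and>
      (P = P' \<and> Q = psucc Q' \<or> P = psucc P' \<and> Q = Q')"
    using elem_move_Arc_Arc[of n "psucc P'" "psucc Q'" P Q] tagged_edge_tau[of n F]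
    by (simp add: E F tau.simps)
  then show ?thesis
    by (auto simp: E F elem_move_Arc_Arc eq_psucc_iff)
next
  fix P Q R e assume E: "E = Arc P Q" and F: "F = Loop R e"
  show ?thesis
    using assms(2,3) tagged_edge_tau[of n F]
    by (auto simp: E F tau.simps elem_move_Arc_Loop elem_move_Loop eq_psucc_iff)
next
  fix P e P' Q' assume E: "E = Loop P e" and F: "F = Arc P' Q'"
  show ?thesis
    using assms(2,3) tagged_edge_tau[of n F]
    by (auto simp: E F tau.simps elem_move_Arc_Loop elem_move_Loop eq_psucc_iff)
next
  fix P e R f assume "E = Loop P e" and "F = Loop R f"
  then show ?thesis
    by (simp add: tau.simps elem_move_Loop)
qed

end
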